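(* Let $a,b\in F$ with $v(a)\le\min\{0,v(b)\}$. Then for every integer $m<-v(3)$, $$\int_{t\in\mathfrak{p}^m\setminus\mathfrak{p}^{m+1}}\psi(at^3+bt)\,dt=0.$$
   Context: $F$ is a non-archimedean local field of characteristic $0$ and odd residue characteristic, with maximal ideal $\mathfrak{p}$ of its ring of integers $\mathcal{O}$, normalised valuation $v$, a fixed unramified additive character $\psi$ (trivial on $\mathcal{O}$, nontrivial on $\mathfrak{p}^{-1}$), and Haar measure $dt$ with $\mathrm{vol}(\mathcal{O})=1$. *)

theory Defs
  imports "HOL-Analysis.Analysis"
begin

text \<open>A field F (type 'a) with a normalised discrete valuation v, given on nonzero
elements as an integer; v 0 = +infinity is encoded by the ideals below.\<close>

definition pideal :: "('a::field \<Rightarrow> int) \<Rightarrow> int \<Rightarrow> 'a set" where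
  "pideal v m = {x. x = 0 \<or> m \<le> v x}"

definition normalised_discrete_valuation :: "('a::field \<Rightarrow> int) \<Rightarrow> bool" where
  "normalised_discrete_valuation v \<longleftrightarrow>
     (\<forall>x y. x \<noteq> 0 \<longrightarrow> y \<noteq> 0 \<longrightarrow> v (x * y) = v x + v y) \<and>
     (\<forall>x y. x \<noteq> 0 \<longrightarrow> y \<noteq> 0 \<longrightarrow> x + y \<noteq> 0 \<longrightarrow> min (v x) (v y) \<le> v (x + y)) \<and>
     (\<exists>\<pi>. \<pi> \<noteq> 0 \<and> v \<pi> = 1)"

definition valuation_complete :: "('a::field \<Rightarrow> int) \<Rightarrow> bool" where
  "valuation_complete v \<longleftrightarrow>
     (\<forall>X :: nat \<Rightarrow> 'a. (\<forall>n. \<exists>N. \<forall>i\<ge>N. \<forall>j\<ge>N. X i - X j \<in> pideal v n) \<longrightarrow>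
        (\<exists>L. \<forall>n. \<exists>N. \<forall>i\<ge>N. X i - L \<in> pideal v n))"

definition residue_field :: "('a::field \<Rightarrow> int) \<Rightarrow> 'a set set" where
  "residue_field v = (\<lambda>x. {y \<in> pideal v 0. y - x \<in> pideal v 1}) ` pideal v 0"

text \<open>Non-archimedean local field of characteristic 0 (char 0 via the type class
field_char_0) with odd residue characteristic (2 is not zero in O/p, i.e. 2 is not in p).\<close>
definition nonarch_local_field_odd :: "('a::field_char_0 \<Rightarrow> int) \<Rightarrow> bool" where
  "nonarch_local_field_odd v \<longleftrightarrow>
     normalised_discrete_valuation v \<and> valuation_complete v \<and>
     finite (residue_field v) \<and> (2::'a) \<notin> pideal v 1"

definition val_balls :: "('a::field \<Rightarrow> int) \<Rightarrow> 'a set set" where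
  "val_balls v = {{x. x - c \<in> pideal v n} | c n. True}"

definition haar_measure_norm :: "('a::field \<Rightarrow> int) \<Rightarrow> 'a measure \<Rightarrow> bool" where
  "haar_measure_norm v M \<longleftrightarrow>
     space M = UNIV \<and> sets M = sigma_sets UNIV (val_balls v) \<and>
     (\<forall>c A. A \<in> sets M \<longrightarrow> emeasure M ((\<lambda>x. c + x) ` A) = emeasure M A) \<and>
     emeasure M (pideal v 0) = 1"

definition unramified_additive_character :: "('a::field \<Rightarrow> int) \<Rightarrow> ('a \<Rightarrow> complex) \<Rightarrow> bool" where
  "unramified_additive_character v \<psi> \<longleftrightarrow>
     (\<forall>x y. \<psi> (x + y) = \<psi> x * \<psi> y) \<and> (\<forall>x. cmod (\<psi> x) = 1) \<and>
     (\<forall>x \<in> pideal v 0. \<psi> x = 1) \<and> (\<exists>x \<in> pideal v (-1). \<psi> x \<noteq> 1)"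

end

theory Submission
  imports Defs
begin

text \<open>Split the shell p^m - p^(m+1) into the balls t + p^k with k = -v(3 a t^2 + b) - 1,
  which is the same for every t in the shell; since the residue field is finite, these are
  finitely many disjoint balls. On such a ball the phase a x^3 + b x is, modulo O, affine
  with slope f'(t) = 3 a t^2 + b, because the hypothesis m < -v(3) makes the quadratic and
  cubic Taylor terms integral. Translating the ball by s = y / f'(t), where y \<in> p^(-1) and
  \<psi>(y) \<noteq> 1, preserves the ball and Haar measure but multiplies the integrand by \<psi>(y);
  hence every ball contributes 0.\<close>

definition val_ball :: "('a::field \<Rightarrow> int) \<Rightarrow> int \<Rightarrow> 'a \<Rightarrow> 'a set" where
  "val_ball v n c = {x. x - c \<in> pideal v n}"

lemma mem_val_ball [simp]: "x \<in> val_ball v n c \<longleftrightarrow> x - c \<in> pideal v n"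
  by (simp add: val_ball_def)

lemma zero_in_pideal [simp]: "0 \<in> pideal v n"
  by (simp add: pideal_def)

lemma pideal_self: "x \<in> pideal v (v x)"
  by (simp add: pideal_def)

lemma pideal_antimono: "n \<le> n' \<Longrightarrow> x \<in> pideal v n' \<Longrightarrow> x \<in> pideal v n"
  by (auto simp: pideal_def)

lemma haar_val_ball_sets: "haar_measure_norm v M \<Longrightarrow> val_ball v n c \<in> sets M"
  unfolding haar_measure_norm_def val_balls_def val_ball_def by (auto intro: sigma_sets.Basic)

lemma haar_translation_measurable:
  assumes "haar_measure_norm v M"
  shows "(\<lambda>x. x + s) \<in> measurable M M"
proof (rule measurable_sigma_sets[where \<Omega> = UNIV and A = "val_balls v"])
  show "sets M = sigma_sets UNIV (val_balls v)"
    using assms by (simp add: haar_measure_norm_def)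
  fix B assume "B \<in> val_balls v"
  then obtain c n where "B = val_ball v n c"
    unfolding val_balls_def val_ball_def by blast
  then have "(\<lambda>x. x + s) -` B \<inter> space M = val_ball v n (c - s)"
    using assms by (auto simp: haar_measure_norm_def algebra_simps)
  then show "(\<lambda>x. x + s) -` B \<inter> space M \<in> sets M"
    using haar_val_ball_sets[OF assms] by simp
qed auto

lemma haar_distr_translation:
  assumes "haar_measure_norm v M"
  shows "distr M M (\<lambda>x. x + s) = M"
proof (rule measure_eqI)
  fix A assume "A \<in> sets (distr M M (\<lambda>x. x + s))"
  then have A: "A \<in> sets M"
    by simp
  have preimage: "(\<lambda>x. x + s) -` A \<inter> space M = (+) (- s) ` A"
    using assms by (force simp: haar_measure_norm_def)
  have "emeasure (distr M M (\<lambda>x. x + s)) A = emeasure M ((\<lambda>x. x + s) -` A \<inter> space M)"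
    by (rule emeasure_distr[OF haar_translation_measurable[OF assms] A])
  also have "\<dots> = emeasure M A"
    using assms A unfolding preimage haar_measure_norm_def by blast
  finally show "emeasure (distr M M (\<lambda>x. x + s)) A = emeasure M A" .
qed simp

lemma haar_integral_translation:
  fixes g :: "'a::field \<Rightarrow> 'b::{banach, second_countable_topology}"
  assumes "haar_measure_norm v M" "g \<in> borel_measurable M"
  shows "(\<integral>x. g (x + s) \<partial>M) = integral\<^sup>L M g"
  using integral_distr[OF haar_translation_measurable[OF assms(1)] assms(2)]
  by (simp add: haar_distr_translation[OF assms(1)])

lemma haar_set_integral_eq_0_if_translation_twists:
  fixes g :: "'a::field \<Rightarrow> complex"
  assumes "haar_measure_norm v M" "set_integrable M A g"
    and "\<And>x. x + s \<in> A \<longleftrightarrow> x \<in> A" "\<And>x. x \<in> A \<Longrightarrow> g (x + s) = c * g x" "c \<noteq> 1"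
  shows "(LINT x:A|M. g x) = 0"
proof -
  define G where "G x = indicator A x *\<^sub>R g x" for x
  have G_translate: "G (x + s) = c * G x" for x
    using assms(3,4) by (cases "x \<in> A") (simp_all add: G_def)
  have "G \<in> borel_measurable M"
    using assms(2) unfolding set_integrable_def G_def by (rule borel_measurable_integrable)
  then have "integral\<^sup>L M G = (\<integral>x. G (x + s) \<partial>M)"
    by (rule haar_integral_translation[OF assms(1), symmetric])
  also have "\<dots> = c * integral\<^sup>L M G"
    by (simp add: G_translate)
  finally have "(1 - c) * integral\<^sup>L M G = 0"
    by (simp add: algebra_simps)
  with assms(5) show ?thesis
    unfolding set_lebesgue_integral_def G_def[symmetric] by simp
qed

locale discrete_valuation =
  fixes v :: "'a::field \<Rightarrow> int"
  assumes normalised: "normalised_discrete_valuation v"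
begin

lemma v_mult: "x \<noteq> 0 \<Longrightarrow> y \<noteq> 0 \<Longrightarrow> v (x * y) = v x + v y"
  using normalised unfolding normalised_discrete_valuation_def by blast

lemma v_add_ge_min: "x \<noteq> 0 \<Longrightarrow> y \<noteq> 0 \<Longrightarrow> x + y \<noteq> 0 \<Longrightarrow> min (v x) (v y) \<le> v (x + y)"
  using normalised unfolding normalised_discrete_valuation_def by blast

lemma v_one [simp]: "v 1 = 0"
  using v_mult[of 1 1] by simp

lemma v_minus [simp]: "v (- x) = v x"
proof (cases "x = 0")
  case False
  have "v (-1) = 0"
    using v_mult[of "-1" "-1"] by simp
  then show ?thesis
    using v_mult[of "-1" x] False by simp
qed simp

lemma v_inverse: "x \<noteq> 0 \<Longrightarrow> v (inverse x) = - v x"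
  using v_mult[of x "inverse x"] by simp

lemma v_surj: "\<exists>u. u \<noteq> 0 \<and> v u = j"
proof -
  obtain \<pi> where \<pi>: "\<pi> \<noteq> 0" "v \<pi> = 1"
    using normalised unfolding normalised_discrete_valuation_def by blast
  have v_power: "v (\<pi> ^ n) = int n" for n
    by (induction n) (simp_all add: v_mult \<pi>)
  show ?thesis
  proof (cases "0 \<le> j")
    case True
    then show ?thesis
      using v_power[of "nat j"] \<pi> by (intro exI[of _ "\<pi> ^ nat j"]) simp
  next
    case False
    then show ?thesis
      using v_power[of "nat (- j)"] v_inverse[of "\<pi> ^ nat (- j)"] \<pi>
      by (intro exI[of _ "inverse (\<pi> ^ nat (- j))"]) simp
  qed
qed

lemma v_add_eq_left:
  assumes "x \<noteq> 0" "y \<in> pideal v (v x + 1)"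
  shows "x + y \<noteq> 0 \<and> v (x + y) = v x"
proof (cases "y = 0")
  case False
  then have less: "v x < v y"
    using assms(2) by (simp add: pideal_def)
  have "x + y \<noteq> 0"
    using less by (metis add_eq_0_iff2 less_irrefl v_minus)
  moreover have "min (v x) (v y) \<le> v (x + y)"
    using v_add_ge_min[OF assms(1) False] calculation .
  moreover have "min (v (x + y)) (v (- y)) \<le> v x"
    using v_add_ge_min[of "x + y" "- y"] calculation False assms(1) by simp
  ultimately show ?thesis
    using less by simp
qed (simp add: assms(1))

lemma pideal_add: "x \<in> pideal v n \<Longrightarrow> y \<in> pideal v n \<Longrightarrow> x + y \<in> pideal v n"
  using v_add_ge_min[of x y] by (cases "x = 0 \<or> y = 0 \<or> x + y = 0") (auto simp: pideal_def)

lemma pideal_uminus: "x \<in> pideal v n \<Longrightarrow> - x \<in> pideal v n"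
  by (simp add: pideal_def)

lemma pideal_diff: "x \<in> pideal v n \<Longrightarrow> y \<in> pideal v n \<Longrightarrow> x - y \<in> pideal v n"
  using pideal_add[of x n "- y"] pideal_uminus[of y n] by simp

lemma pideal_mult: "x \<in> pideal v n \<Longrightarrow> y \<in> pideal v n' \<Longrightarrow> x * y \<in> pideal v (n + n')"
  using v_mult[of x y] by (cases "x = 0 \<or> y = 0") (auto simp: pideal_def)

lemma of_nat_in_pideal_0: "of_nat k \<in> pideal v 0"
proof (induction k)
  case (Suc k)
  then show ?case
    using pideal_add[OF pideal_self[of 1 v]] by simp
qed simp

lemma val_ball_sym: "x \<in> val_ball v n y \<longleftrightarrow> y \<in> val_ball v n x"
  using pideal_uminus[of "x - y" n] pideal_uminus[of "y - x" n] by auto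

lemma val_ball_eq_if_mem: "y \<in> val_ball v n x \<Longrightarrow> val_ball v n y = val_ball v n x"
  using pideal_add[of _ n "y - x"] pideal_diff[of _ n "y - x"] by fastforce

lemma residue_balls_cover_pideal_0:
  assumes "finite (residue_field v)"
  shows "\<exists>R. finite R \<and> pideal v 0 \<subseteq> (\<Union>r\<in>R. val_ball v 1 r)"
proof -
  define cls where "cls x = pideal v 0 \<inter> val_ball v 1 x" for x
  have "residue_field v = cls ` pideal v 0"
    unfolding residue_field_def cls_def by auto
  then obtain R where R: "finite R" "cls ` R = cls ` pideal v 0"
    using finite_subset_image[OF assms, of cls "pideal v 0"] by auto
  have "x \<in> (\<Union>r\<in>R. val_ball v 1 r)" if x: "x \<in> pideal v 0" for x
  proof -
    obtain r where "r \<in> R" "cls x = cls r"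
      using x R(2) by (metis imageE imageI)
    moreover have "x \<in> cls x"
      using x by (simp add: cls_def)
    ultimately show ?thesis
      by (auto simp: cls_def)
  qed
  with R(1) show ?thesis
    by blast
qed

lemma finite_ball_cover_pideal_succ:
  assumes "finite (residue_field v)"
  shows "\<exists>R. finite R \<and> pideal v j \<subseteq> (\<Union>r\<in>R. val_ball v (j + 1) r)"
proof -
  obtain R where R: "finite R" "pideal v 0 \<subseteq> (\<Union>r\<in>R. val_ball v 1 r)"
    using residue_balls_cover_pideal_0[OF assms] by blast
  obtain u where u: "u \<noteq> 0" "v u = j"
    using v_surj by blast
  have "x \<in> (\<Union>r\<in>R. val_ball v (j + 1) (u * r))" if x: "x \<in> pideal v j" for x
  proof -
    have "x / u \<in> pideal v 0"
      using pideal_mult[OF x pideal_self[of "inverse u"]] u by (simp add: v_inverse divide_inverse)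
    then obtain r where r: "r \<in> R" "x / u - r \<in> pideal v 1"
      using R(2) by auto
    have "u * (x / u - r) \<in> pideal v (j + 1)"
      using pideal_mult[OF pideal_self r(2), of u] u(2) by simp
    with u(1) r(1) show ?thesis
      by (auto simp: algebra_simps)
  qed
  with R(1) show ?thesis
    by (intro exI[of _ "(*) u ` R"]) auto
qed

lemma finite_ball_cover_pideal:
  assumes "finite (residue_field v)" "j \<le> k"
  shows "\<exists>T. finite T \<and> pideal v j \<subseteq> (\<Union>t\<in>T. val_ball v k t)"
  using assms(2)
proof (induction k rule: int_ge_induct)
  case base
  show ?case
    by (intro exI[of _ "{0}"]) auto
next
  case (step k)
  obtain T where T: "finite T" "pideal v j \<subseteq> (\<Union>t\<in>T. val_ball v k t)"
    using step.IH by blast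
  obtain R where R: "finite R" "pideal v k \<subseteq> (\<Union>r\<in>R. val_ball v (k + 1) r)"
    using finite_ball_cover_pideal_succ[OF assms(1)] by blast
  have "x \<in> (\<Union>(t, r)\<in>T \<times> R. val_ball v (k + 1) (t + r))" if "x \<in> pideal v j" for x
  proof -
    obtain t where "t \<in> T" "x - t \<in> pideal v k"
      using T(2) \<open>x \<in> pideal v j\<close> by auto
    moreover obtain r where "r \<in> R" "x - t - r \<in> pideal v (k + 1)"
      using R(2) calculation(2) by auto
    ultimately show ?thesis
      by (auto simp: diff_diff_eq)
  qed
  with T(1) R(1) show ?case
    by (intro exI[of _ "(\<lambda>(t, r). t + r) ` (T \<times> R)"]) auto
qed

lemma val_ball_subset_shell:
  assumes "t \<noteq> 0" "v t < k"
  shows "val_ball v k t \<subseteq> pideal v (v t) - pideal v (v t + 1)"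
proof
  fix x assume "x \<in> val_ball v k t"
  then have "x - t \<in> pideal v (v t + 1)"
    using assms(2) pideal_antimono[of "v t + 1" k "x - t" v] by simp
  then have "x \<noteq> 0 \<and> v x = v t"
    using v_add_eq_left[OF assms(1)] by fastforce
  then show "x \<in> pideal v (v t) - pideal v (v t + 1)"
    by (simp add: pideal_def)
qed

lemma v_cubic_derivative:
  assumes "3 * a \<noteq> 0" "t \<noteq> 0" "b \<noteq> 0 \<longrightarrow> v a \<le> v b" "v 3 + 2 * v t < 0"
  shows "3 * a * t\<^sup>2 + b \<noteq> 0 \<and> v (3 * a * t\<^sup>2 + b) = v 3 + v a + 2 * v t"
proof -
  have v_lead: "v (3 * a * t\<^sup>2) = v 3 + v a + 2 * v t"
    using assms(1,2) by (simp add: v_mult power2_eq_square)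
  have "b \<in> pideal v (v (3 * a * t\<^sup>2) + 1)"
    using assms(3,4) v_lead by (cases "b = 0") (auto simp: pideal_def)
  with assms(1,2) v_lead show ?thesis
    using v_add_eq_left[of "3 * a * t\<^sup>2" b] by simp
qed

lemma cubic_increment_linear_mod_pideal_0:
  assumes "t \<in> pideal v m" "x \<in> val_ball v k t" "s \<in> pideal v k" "m \<le> k"
    and "0 \<le> v 3 + v a + m + 2 * k" "0 \<le> v a + 3 * k"
  shows "a * (x + s) ^ 3 + b * (x + s) - (a * x ^ 3 + b * x) - (3 * a * t\<^sup>2 + b) * s \<in> pideal v 0"
proof -
  define d where "d = x - t"
  have d: "d \<in> pideal v k" "d \<in> pideal v m"
    using assms(2) pideal_antimono[OF assms(4)] by (simp_all add: d_def)
  have x: "x \<in> pideal v m"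
    using pideal_add[OF assms(1) d(2)] by (simp add: d_def)
  have td: "2 * t + d \<in> pideal v m"
    using pideal_add[OF pideal_add[OF assms(1) assms(1)] d(2)] by (simp only: mult_2)
  have three_a: "3 * a \<in> pideal v (v 3 + v a)"
    by (rule pideal_mult[OF pideal_self pideal_self])
  have r1: "3 * a * d * (2 * t + d) * s \<in> pideal v (v 3 + v a + k + m + k)"
    by (rule pideal_mult[OF pideal_mult[OF pideal_mult[OF three_a d(1)] td] assms(3)])
  have r2: "3 * a * x * (s * s) \<in> pideal v (v 3 + v a + m + (k + k))"
    by (rule pideal_mult[OF pideal_mult[OF three_a x] pideal_mult[OF assms(3) assms(3)]])
  have r3: "a * (s * s * s) \<in> pideal v (v a + (k + k + k))"
    by (rule pideal_mult[OF pideal_self pideal_mult[OF pideal_mult[OF assms(3) assms(3)] assms(3)]])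
  have "3 * a * d * (2 * t + d) * s + 3 * a * x * (s * s) + a * (s * s * s) \<in> pideal v 0"
    using assms(4-6)
    by (intro pideal_add pideal_antimono[OF _ r1] pideal_antimono[OF _ r2] pideal_antimono[OF _ r3])
      linarith+
  moreover have "a * (x + s) ^ 3 + b * (x + s) - (a * x ^ 3 + b * x) - (3 * a * t\<^sup>2 + b) * s
      = 3 * a * d * (2 * t + d) * s + 3 * a * x * (s * s) + a * (s * s * s)"
    unfolding d_def by algebra
  ultimately show ?thesis
    by simp
qed

lemma cubic_character_integral_over_ball_eq_0:
  assumes "haar_measure_norm v M" "unramified_additive_character v \<psi>"
    and "set_integrable M (val_ball v k t) (\<lambda>x. \<psi> (a * x ^ 3 + b * x))"
    and "t \<in> pideal v m" "m \<le> k" "0 \<le> v 3 + v a + m + 2 * k" "0 \<le> v a + 3 * k"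
    and "3 * a * t\<^sup>2 + b \<noteq> 0" "k + v (3 * a * t\<^sup>2 + b) \<le> -1"
  shows "(LINT x:val_ball v k t|M. \<psi> (a * x ^ 3 + b * x)) = 0"
proof -
  define c where "c = 3 * a * t\<^sup>2 + b"
  have \<psi>_add: "\<psi> (x + y) = \<psi> x * \<psi> y" and \<psi>_int: "x \<in> pideal v 0 \<Longrightarrow> \<psi> x = 1" for x y
    using assms(2) by (simp_all add: unramified_additive_character_def)
  obtain y where y: "y \<in> pideal v (-1)" "\<psi> y \<noteq> 1"
    using assms(2) unfolding unramified_additive_character_def by blast
  define s where "s = y / c"
  have "s \<in> pideal v (-1 + - v c)"
    using pideal_mult[OF y(1) pideal_self[of "inverse c"]] assms(8)
    by (simp add: s_def c_def v_inverse divide_inverse)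
  then have s: "s \<in> pideal v k"
    using assms(9) by (auto simp: c_def intro: pideal_antimono[of k "-1 + - v c"])
  show ?thesis
  proof (rule haar_set_integral_eq_0_if_translation_twists[OF assms(1,3)])
    show "x + s \<in> val_ball v k t \<longleftrightarrow> x \<in> val_ball v k t" for x
      using pideal_add[OF _ s, of "x - t"] pideal_diff[OF _ s, of "x + s - t"]
      by (auto simp: algebra_simps)
    show "\<psi> (a * (x + s) ^ 3 + b * (x + s)) = \<psi> y * \<psi> (a * x ^ 3 + b * x)"
      if "x \<in> val_ball v k t" for x
    proof -
      define r where "r = a * (x + s) ^ 3 + b * (x + s) - (a * x ^ 3 + b * x) - c * s"
      have "\<psi> r = 1"
        using cubic_increment_linear_mod_pideal_0[OF assms(4) that s assms(5-7), of b] \<psi>_int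
        by (simp add: r_def c_def)
      moreover have "a * (x + s) ^ 3 + b * (x + s) = (a * x ^ 3 + b * x) + y + r"
        using assms(8) by (simp add: r_def s_def c_def)
      ultimately show ?thesis
        by (simp add: \<psi>_add)
    qed
  qed (fact y(2))
qed

lemma cubic_character_integral_over_small_ball_eq_0:
  assumes "haar_measure_norm v M" "unramified_additive_character v \<psi>"
    and "set_integrable M (val_ball v k t) (\<lambda>x. \<psi> (a * x ^ 3 + b * x))"
    and "3 * a \<noteq> 0" "v a \<le> 0" "b \<noteq> 0 \<longrightarrow> v a \<le> v b" "0 \<le> v 3"
    and "t \<noteq> 0" "v t < - v 3" "k = - (v 3 + v a + 2 * v t) - 1"
  shows "(LINT x:val_ball v k t|M. \<psi> (a * x ^ 3 + b * x)) = 0"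
proof (rule cubic_character_integral_over_ball_eq_0[OF assms(1-3) pideal_self])
  show "v t \<le> k" "0 \<le> v 3 + v a + v t + 2 * k" "0 \<le> v a + 3 * k"
    using assms(5,7,9,10) by (simp_all add: algebra_simps)
  show "3 * a * t\<^sup>2 + b \<noteq> 0" "k + v (3 * a * t\<^sup>2 + b) \<le> -1"
    using v_cubic_derivative[OF assms(4,8,6)] assms(7,9,10) by simp_all
qed

lemma set_integral_eq_0_if_ball_integrals_eq_0:
  fixes g :: "'a \<Rightarrow> 'b::{banach, second_countable_topology}"
  assumes "finite (residue_field v)" "haar_measure_norm v M" "set_integrable M A g"
    and "A \<subseteq> pideal v j" "j \<le> k"
    and "\<And>t. t \<in> A \<Longrightarrow> val_ball v k t \<subseteq> A"
    and "\<And>t. t \<in> A \<Longrightarrow> (LINT x:val_ball v k t|M. g x) = 0"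
  shows "(LINT x:A|M. g x) = 0"
proof -
  obtain T where T: "finite T" "pideal v j \<subseteq> (\<Union>t\<in>T. val_ball v k t)"
    using finite_ball_cover_pideal[OF assms(1,5)] by blast
  define B where "B = val_ball v k ` (T \<inter> A)"
  have ball_in_B: "val_ball v k x \<in> B" if x: "x \<in> A" for x
  proof -
    obtain t where t: "t \<in> T" "x \<in> val_ball v k t"
      using T(2) assms(4) x by blast
    have "t \<in> A"
      using assms(6)[OF x] val_ball_sym[THEN iffD1, OF t(2)] by blast
    with t(1) show ?thesis
      unfolding B_def val_ball_eq_if_mem[OF t(2)] by blast
  qed
  have B_ball: "C = val_ball v k x \<and> C \<in> sets M \<and> C \<subseteq> A" if C: "C \<in> B" and x: "x \<in> C" for C x
  proof -
    obtain t where "t \<in> A" "C = val_ball v k t"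
      using C by (auto simp: B_def)
    moreover from this x have "C = val_ball v k x"
      using val_ball_eq_if_mem[of x k t] by simp
    ultimately show ?thesis
      using haar_val_ball_sets[OF assms(2)] assms(6) by simp
  qed
  have A_eq: "A = (\<Union>C\<in>B. C)"
  proof (intro equalityI subsetI)
    fix x assume "x \<in> A"
    then show "x \<in> (\<Union>C\<in>B. C)"
      by (rule UN_I[OF ball_in_B]) simp
  next
    fix x assume "x \<in> (\<Union>C\<in>B. C)"
    then obtain C where "C \<in> B" "x \<in> C"
      by blast
    then show "x \<in> A"
      using B_ball[OF \<open>C \<in> B\<close> \<open>x \<in> C\<close>] by blast
  qed
  have "(LINT x:A|M. g x) = (LINT x:(\<Union>C\<in>B. C)|M. g x)"
    by (simp only: flip: A_eq)
  also have "\<dots> = (\<Sum>C\<in>B. LINT x:C|M. g x)"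
  proof (rule set_integral_finite_UN_AE)
    show "finite B"
      using T(1) by (simp add: B_def)
    fix C D assume "C \<in> B" "D \<in> B"
    have "C = D" if "x \<in> C" "x \<in> D" for x
      using B_ball[OF \<open>C \<in> B\<close> that(1)] B_ball[OF \<open>D \<in> B\<close> that(2)] by simp
    then show "AE x in M. x \<in> C \<and> x \<in> D \<longrightarrow> C = D"
      by (intro AE_I2) blast
    obtain t where "C = val_ball v k t"
      using \<open>C \<in> B\<close> by (auto simp: B_def)
    then have "t \<in> C"
      by simp
    then have "C \<in> sets M" "C \<subseteq> A"
      using B_ball[OF \<open>C \<in> B\<close>] by simp_all
    then show "C \<in> sets M" "set_integrable M C g"
      using set_integrable_subset[OF assms(3)] by simp_all
  qed
  also have "\<dots> = 0"
    using assms(7) by (intro sum.neutral) (auto simp: B_def)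
  finally show ?thesis .
qed

end

theorem lemma7p6:
  fixes v :: "'a::field_char_0 \<Rightarrow> int" and M :: "'a measure" and \<psi> :: "'a \<Rightarrow> complex"
    and a b :: 'a and m :: int
  assumes "nonarch_local_field_odd v"
    and "haar_measure_norm v M"
    and "unramified_additive_character v \<psi>"
    and "a \<noteq> 0" and "v a \<le> 0" and "b \<noteq> 0 \<longrightarrow> v a \<le> v b"
    and "m < - v 3"
  shows "(LINT t:(pideal v m - pideal v (m + 1))|M. \<psi> (a * t ^ 3 + b * t)) = 0"
proof -
  interpret discrete_valuation v
    using assms(1) by unfold_locales (simp add: nonarch_local_field_odd_def)
  have residue_finite: "finite (residue_field v)"
    using assms(1) by (simp add: nonarch_local_field_odd_def)
  have "0 \<le> v 3"
    using of_nat_in_pideal_0[of 3] by (simp add: pideal_def)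
  define k where "k = - (v 3 + v a + 2 * m) - 1"
  define S where "S = pideal v m - pideal v (m + 1)"
  have "m < k"
    using assms(5,7) \<open>0 \<le> v 3\<close> by (simp add: k_def)
  show ?thesis
  proof (cases "set_integrable M S (\<lambda>t. \<psi> (a * t ^ 3 + b * t))")
    case True
    show ?thesis
      unfolding S_def[symmetric]
    proof (rule set_integral_eq_0_if_ball_integrals_eq_0[OF residue_finite assms(2) True])
      show "S \<subseteq> pideal v m" "m \<le> k"
        using \<open>m < k\<close> by (auto simp: S_def)
      fix t assume "t \<in> S"
      then have t: "t \<noteq> 0" "v t = m"
        by (auto simp: S_def pideal_def)
      then show ball_in_S: "val_ball v k t \<subseteq> S"
        using val_ball_subset_shell[of t k] \<open>m < k\<close> by (simp add: S_def)
      show "(LINT x:val_ball v k t|M. \<psi> (a * x ^ 3 + b * x)) = 0"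
        using set_integrable_subset[OF True haar_val_ball_sets[OF assms(2)] ball_in_S]
          assms(4-7) \<open>0 \<le> v 3\<close> t
        by (intro cubic_character_integral_over_small_ball_eq_0[OF assms(2,3)]) (simp_all add: k_def)
    qed
  next
    case False
    \<comment> \<open>the Bochner integral of a non-integrable function is 0\<close>
    then show ?thesis
      by (simp add: S_def set_lebesgue_integral_def set_integrable_def not_integrable_integral_eq)
  qed
qed

end
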